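(* Let $G_1=(V_1,E_1)$ and $G_2=(V_2,E_2)$ be finite simple directed graphs and let $G=(V,E)$ be their product: $V=V_1\times V_2$, and $((v,u),(v',u'))\in E$ iff $(v,v')\in E_1$ and $(u,u')\in E_2$. For $e'=((v,u),(v',u'))\in E$ write $e'_1=(v,v')$. Let $P=(\pi,Q)$ be a stationary Markov chain on $G$ and $P_1=(\pi_1,Q_1)$ a stationary Markov chain on $G_1$. Suppose that (i) for all $e\in E_1$, $P_1(e)=\sum_{e'\in E,\ e'_1=e}P(e')$; and (ii) for all $u_0\in V_2$ and $v_0,v_1\in V_1$, $\sum_{u_1\in V_2}Q\big((v_1,u_1)\mid(v_0,u_0)\big)=Q_1(v_1\mid v_0)$. Then the $G_1$-marginal of the Markov process $\hat P$ equals the Markov process $\hat P_1$.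
   Context: A stationary Markov chain on a finite directed graph $H=(W,F)$ is a probability measure $P$ on $F$ such that for every vertex $w$, $\pi(w):=\sum_{e:\sigma(e)=w}P(e)=\sum_{e:\tau(e)=w}P(e)$, with $\pi(w)>0$ for all $w$ (no degenerate vertices); here $\sigma(e),\tau(e)$ are the source and target of $e$. The transition probabilities are $Q(e)=P(e)/\pi(\sigma(e))$; for a simple graph and $e=(w,w')$ one writes $Q(w'\mid w)=Q(e)$, and $Q(w'\mid w)=0$ if $(w,w')\notin F$. The pair is denoted $P=(\pi,Q)$. The induced stationary Markov process $\hat P$ is the probability measure on the space of bi-infinite paths $(e_i)_{i\in\mathbb{Z}}$ in $H$ (with $\tau(e_i)=\sigma(e_{i+1})$) determined by $\hat P(\{(e_i): e_0\cdots e_{n-1}=f_0\cdots f_{n-1}\})=P(f_0)\prod_{i=1}^{n-1}Q(f_i)$ for every finite path $f_0\cdots f_{n-1}$. The $G_1$-marginal of $\hat P$ is its pushforward under the map sending a bi-infinite path $(((v_i,u_i),(v_{i+1},u_{i+1})))_i$ in $G$ to the path $((v_i,v_{i+1}))_i$ in $G_1$. *)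

theory Defs
  imports "HOL-Probability.Probability"
begin

definition simple_digraph :: "'v set \<Rightarrow> ('v \<times> 'v) set \<Rightarrow> bool" where
  "simple_digraph V E \<longleftrightarrow> finite V \<and> E \<subseteq> V \<times> V \<and> (\<forall>v. (v, v) \<notin> E)"

definition prod_edges :: "('a \<times> 'a) set \<Rightarrow> ('b \<times> 'b) set \<Rightarrow> (('a \<times> 'b) \<times> ('a \<times> 'b)) set" where
  "prod_edges E1 E2 = {((v, u), (v', u')). (v, v') \<in> E1 \<and> (u, u') \<in> E2}"

definition edge1 :: "(('a \<times> 'b) \<times> ('a \<times> 'b)) \<Rightarrow> ('a \<times> 'a)" where
  "edge1 e = (fst (fst e), fst (snd e))"

definition pi_out :: "('v \<times> 'v) set \<Rightarrow> (('v \<times> 'v) \<Rightarrow> real) \<Rightarrow> 'v \<Rightarrow> real" where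
  "pi_out E P w = (\<Sum>e\<in>{e\<in>E. fst e = w}. P e)"

definition pi_in :: "('v \<times> 'v) set \<Rightarrow> (('v \<times> 'v) \<Rightarrow> real) \<Rightarrow> 'v \<Rightarrow> real" where
  "pi_in E P w = (\<Sum>e\<in>{e\<in>E. snd e = w}. P e)"

text \<open>Stationary Markov chain on (V,E): a probability measure on E (given by its
  values on E) with in-flow = out-flow = \<pi>(w) > 0 at every vertex.\<close>
definition stationary_mc :: "'v set \<Rightarrow> ('v \<times> 'v) set \<Rightarrow> (('v \<times> 'v) \<Rightarrow> real) \<Rightarrow> bool" where
  "stationary_mc V E P \<longleftrightarrow>
     (\<forall>e\<in>E. P e \<ge> 0) \<and> (\<Sum>e\<in>E. P e) = 1 \<and>
     (\<forall>w\<in>V. pi_out E P w = pi_in E P w \<and> pi_out E P w > 0)"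

definition trans :: "('v \<times> 'v) set \<Rightarrow> (('v \<times> 'v) \<Rightarrow> real) \<Rightarrow> ('v \<times> 'v) \<Rightarrow> real" where
  "trans E P e = P e / pi_out E P (fst e)"

definition trans_prob :: "('v \<times> 'v) set \<Rightarrow> (('v \<times> 'v) \<Rightarrow> real) \<Rightarrow> 'v \<Rightarrow> 'v \<Rightarrow> real" where
  "trans_prob E P w w' = (if (w, w') \<in> E then trans E P (w, w') else 0)"

definition is_path :: "('v \<times> 'v) set \<Rightarrow> nat \<Rightarrow> (nat \<Rightarrow> ('v \<times> 'v)) \<Rightarrow> bool" where
  "is_path E n f \<longleftrightarrow> (\<forall>i<n. f i \<in> E) \<and> (\<forall>i. Suc i < n \<longrightarrow> snd (f i) = fst (f (Suc i)))"

definition seq_space :: "(int \<Rightarrow> 'e) measure" where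
  "seq_space = PiM UNIV (\<lambda>_. count_space UNIV)"

definition markov_process ::
  "'v set \<Rightarrow> ('v \<times> 'v) set \<Rightarrow> (('v \<times> 'v) \<Rightarrow> real) \<Rightarrow> (int \<Rightarrow> ('v \<times> 'v)) measure \<Rightarrow> bool" where
  "markov_process V E P M \<longleftrightarrow>
     prob_space M \<and> sets M = sets seq_space \<and>
     (\<forall>k n f. n \<ge> 1 \<longrightarrow> is_path E n f \<longrightarrow>
        measure M {\<omega> \<in> space M. \<forall>i<n. \<omega> (k + int i) = f i}
          = P (f 0) * (\<Prod>i\<in>{1..<n}. trans E P (f i)))"

definition marg1 :: "(int \<Rightarrow> (('a \<times> 'b) \<times> ('a \<times> 'b))) \<Rightarrow> (int \<Rightarrow> ('a \<times> 'a))" where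
  "marg1 \<omega> = (\<lambda>i. edge1 (\<omega> i))"

end

(*
  A stationary Markov process on a finite graph is determined by the probabilities of
  cylinders over windows of consecutive coordinates, since these generate the product
  sigma algebra.  Almost surely every window of a Markov process is a path, so each such
  cylinder probability is a finite sum of path weights P(f 0) * prod Q(f i).  It therefore
  suffices to show that the marginal assigns each G1-path f the weight given by P1.  The
  preimage of the cylinder of f is, up to a null set, the disjoint union of the cylinders
  of the lifts of f to paths in G.  Summing their weights and eliminating the
  G2-coordinates one edge at a time from the end, condition (ii) turns each transition
  factor into Q1, and condition (i) turns the weight of the first edge into P1.
*)
theory Submission
  imports Defs
begin

lemma space_seq_space [simp]: "space (seq_space :: (int \<Rightarrow> 'e) measure) = UNIV"
  by (simp add: seq_space_def space_PiM)

lemma window_in_sets_seq_space: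
  "{\<omega>. \<forall>i<(n::nat). \<omega> (h i) \<in> X i} \<in> sets (seq_space :: (int \<Rightarrow> 'e) measure)"
proof -
  have "(\<lambda>\<omega>::int \<Rightarrow> 'e. \<omega> j) \<in> measurable seq_space (count_space UNIV)" for j
    unfolding seq_space_def by (rule measurable_component_singleton) simp
  then have "(\<lambda>\<omega>. \<omega> j) -` A \<inter> space seq_space \<in> sets (seq_space :: (int \<Rightarrow> 'e) measure)" for j A
    by (rule measurable_sets) simp
  then have "{\<omega>. \<omega> j \<in> A} \<in> sets (seq_space :: (int \<Rightarrow> 'e) measure)" for j A
    by (simp add: vimage_def)
  then have "{\<omega>. \<forall>i\<in>{..<n}. \<omega> (h i) \<in> X i} \<in> sets (seq_space :: (int \<Rightarrow> 'e) measure)"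
    using sets.sets_Collect_finite_All[where M=seq_space and S="{..<n}"
      and P="\<lambda>i \<omega>. \<omega> (h i) \<in> X i"] by simp
  moreover have "{\<omega>. \<forall>i<n. \<omega> (h i) \<in> X i} = {\<omega>. \<forall>i\<in>{..<n}. \<omega> (h i) \<in> X i}"
    by auto
  ultimately show ?thesis by simp
qed

lemma finite_subset_window:
  fixes J :: "int set"
  assumes "finite J"
  obtains k n where "n \<ge> 1" "J \<subseteq> {k..<k + int n}"
proof
  let ?K = "insert 0 J"
  have bounds: "Min ?K \<le> j" "j \<le> Max ?K" if "j \<in> ?K" for j
    using assms that by (auto intro: Min_le Max_ge)
  from bounds[of 0] have "Min ?K \<le> Max ?K" by force
  then show "nat (Max ?K - Min ?K + 1) \<ge> 1" by simp
  show "J \<subseteq> {Min ?K..<Min ?K + int (nat (Max ?K - Min ?K + 1))}"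
    using bounds by fastforce
qed

lemma rectangle_eq_window:
  assumes "J \<subseteq> {k..<k + int n}"
  shows "{\<omega>. \<forall>j\<in>J. \<omega> j \<in> A j}
    = {\<omega>. \<forall>i<n. \<omega> (k + int i) \<in> (if k + int i \<in> J then A (k + int i) else UNIV)}"
proof (intro set_eqI iffI)
  fix \<omega> assume "\<omega> \<in> {\<omega>. \<forall>j\<in>J. \<omega> j \<in> A j}"
  then show "\<omega> \<in> {\<omega>. \<forall>i<n. \<omega> (k + int i) \<in> (if k + int i \<in> J then A (k + int i) else UNIV)}"
    by simp
next
  fix \<omega> assume window: "\<omega> \<in> {\<omega>. \<forall>i<n. \<omega> (k + int i) \<in> (if k + int i \<in> J then A (k + int i) else UNIV)}"
  show "\<omega> \<in> {\<omega>. \<forall>j\<in>J. \<omega> j \<in> A j}"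
  proof (intro CollectI ballI)
    fix j assume "j \<in> J"
    with assms have "k \<le> j" "j < k + int n" by auto
    then have "nat (j - k) < n" "k + int (nat (j - k)) = j" by auto
    with window have "\<omega> j \<in> (if j \<in> J then A j else UNIV)" by fastforce
    with \<open>j \<in> J\<close> show "\<omega> j \<in> A j" by simp
  qed
qed

lemma disjoint_family_on_point_windows:
  "disjoint_family_on (\<lambda>g. {\<omega>. \<forall>i<n. \<omega> (k + int i) = g i}) (PiE {..<n} S)"
  unfolding disjoint_family_on_def
proof (intro ballI impI)
  fix g g' assume "g \<in> PiE {..<n} S" "g' \<in> PiE {..<n} S" "g \<noteq> g'"
  then have "\<exists>i<n. g i \<noteq> g' i"
    by (metis PiE_ext lessThan_iff)
  then show "{\<omega>. \<forall>i<n. \<omega> (k + int i) = g i} \<inter> {\<omega>. \<forall>i<n. \<omega> (k + int i) = g' i} = {}"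
    by auto
qed

lemma edge_pair_eq_window:
  "{\<omega>. \<omega> m = e \<and> \<omega> (m + 1) = e'} = {\<omega>. \<forall>i<2. \<omega> (m + int i) = (if i = 0 then e else e')}"
  by (auto simp: less_2_cases_iff)

definition path_weight ::
    "('v \<times> 'v) set \<Rightarrow> (('v \<times> 'v) \<Rightarrow> real) \<Rightarrow> nat \<Rightarrow> (nat \<Rightarrow> 'v \<times> 'v) \<Rightarrow> real" where
  "path_weight E P n f =
    (if is_path E n f then P (f 0) * (\<Prod>i\<in>{1..<n}. trans E P (f i)) else 0)"

lemma is_path_cong: "(\<And>i. i < n \<Longrightarrow> f i = g i) \<Longrightarrow> is_path E n f = is_path E n g"
  unfolding is_path_def by (metis Suc_lessD)

lemma is_path_Suc_Suc:
  "is_path E (Suc (Suc n)) f \<longleftrightarrow> is_path E (Suc n) f \<and> f (Suc n) \<in> E \<and> snd (f n) = fst (f (Suc n))"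
  unfolding is_path_def by (auto simp: less_Suc_eq)

lemma path_weight_extend:
  "path_weight E P (Suc (Suc n)) (f(Suc n := e))
     = path_weight E P (Suc n) f * (if e \<in> E \<and> snd (f n) = fst e then trans E P e else 0)"
proof -
  have "is_path E (Suc n) (f(Suc n := e)) = is_path E (Suc n) f"
    by (rule is_path_cong) simp
  then have path: "is_path E (Suc (Suc n)) (f(Suc n := e))
      \<longleftrightarrow> is_path E (Suc n) f \<and> e \<in> E \<and> snd (f n) = fst e"
    by (simp add: is_path_Suc_Suc)
  have "(\<Prod>i\<in>{1..<Suc n}. trans E P ((f(Suc n := e)) i)) = (\<Prod>i\<in>{1..<Suc n}. trans E P (f i))"
    by (intro prod.cong) auto
  then have "(\<Prod>i\<in>{1..<Suc (Suc n)}. trans E P ((f(Suc n := e)) i))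
      = (\<Prod>i\<in>{1..<Suc n}. trans E P (f i)) * trans E P e"
    by (simp add: prod.atLeastLessThan_Suc)
  then show ?thesis
    by (simp add: path_weight_def path)
qed

lemma sum_PiE_lessThan_Suc:
  "(\<Sum>g\<in>PiE {..<Suc n} L. F g) = (\<Sum>e\<in>L n. \<Sum>g\<in>PiE {..<n} L. F (g(n := e)))"
proof -
  have PiE_eq: "PiE {..<Suc n} L = (\<lambda>(e, g). g(n := e)) ` (L n \<times> PiE {..<n} L)"
    using PiE_insert_eq[of n "{..<n}" L] by (simp add: lessThan_Suc)
  have "inj_on (\<lambda>(e, g). g(n := e)) (L n \<times> PiE {..<n} L)"
    by (rule inj_combinator) simp
  then show ?thesis
    unfolding PiE_eq by (simp add: sum.reindex sum.cartesian_product case_prod_unfold)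
qed

lemma sum_trans_out_edges:
  assumes "stationary_mc V E P" and "w \<in> V"
  shows "(\<Sum>e\<in>{e\<in>E. fst e = w}. trans E P e) = 1"
proof -
  have "pi_out E P w > 0" using assms unfolding stationary_mc_def by blast
  have "(\<Sum>e\<in>{e\<in>E. fst e = w}. trans E P e) = (\<Sum>e\<in>{e\<in>E. fst e = w}. P e / pi_out E P w)"
    by (intro sum.cong) (auto simp: trans_def)
  also have "\<dots> = pi_out E P w / pi_out E P w"
    unfolding pi_out_def by (rule sum_divide_distrib[symmetric])
  finally show ?thesis using \<open>pi_out E P w > 0\<close> by simp
qed

locale finite_markov_process =
  fixes V :: "'v set" and E :: "('v \<times> 'v) set" and P :: "('v \<times> 'v) \<Rightarrow> real"
    and N :: "(int \<Rightarrow> ('v \<times> 'v)) measure"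
  assumes markov: "markov_process V E P N" and stationary: "stationary_mc V E P"
    and finite_edges: "finite E" and edges_subset: "E \<subseteq> V \<times> V"
begin

sublocale prob_space N
  using markov by (simp add: markov_process_def)

lemma sets_N: "sets N = sets seq_space"
  using markov by (simp add: markov_process_def)

lemma space_N [simp]: "space N = UNIV"
  using sets_eq_imp_space_eq[OF sets_N] by simp

lemma window_in_events: "{\<omega>. \<forall>i<(n::nat). \<omega> (h i) \<in> X i} \<in> events"
  using window_in_sets_seq_space by (simp add: sets_N)

lemma measure_path_window:
  assumes "n \<ge> 1" and "is_path E n f"
  shows "prob {\<omega>. \<forall>i<n. \<omega> (k + int i) = f i} = path_weight E P n f"
  using markov assms by (simp add: markov_process_def path_weight_def)

lemma edge_pair_in_events: "{\<omega>. \<omega> m = e \<and> \<omega> (m + 1) = e'} \<in> events"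
  using window_in_events[of 2 "\<lambda>i. m + int i" "\<lambda>i. {if i = 0 then e else e'}"]
  by (simp add: edge_pair_eq_window)

lemma measure_edge_pair:
  assumes "e \<in> E" and "e' \<in> E" and "snd e = fst e'"
  shows "prob {\<omega>. \<omega> m = e \<and> \<omega> (m + 1) = e'} = P e * trans E P e'"
proof -
  have "is_path E 2 (\<lambda>i. if i = 0 then e else e')"
    using assms by (simp add: is_path_def less_2_cases_iff)
  from measure_path_window[OF _ this, of m] show ?thesis
    by (simp add: edge_pair_eq_window path_weight_def \<open>is_path E 2 _\<close>)
qed

(* The pairs of consecutive edges already carry the total mass
   \<Sum>e. P e * (\<Sum>e' leaving snd e. Q e') = \<Sum>e. P e = 1. *)
lemma prob_chained_pair: "prob {\<omega>. \<omega> m \<in> E \<and> snd (\<omega> m) = fst (\<omega> (m + 1)) \<and> \<omega> (m + 1) \<in> E} = 1"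
proof -
  let ?succ = "\<lambda>e. {e'\<in>E. fst e' = snd e}"
  let ?pair = "\<lambda>(e, e'). {\<omega>. \<omega> m = e \<and> \<omega> (m + 1) = e'}"
  have "{\<omega>. \<omega> m \<in> E \<and> snd (\<omega> m) = fst (\<omega> (m + 1)) \<and> \<omega> (m + 1) \<in> E}
      = (\<Union>p\<in>Sigma E ?succ. ?pair p)"
    by auto
  also have "prob \<dots> = (\<Sum>p\<in>Sigma E ?succ. prob (?pair p))"
    using finite_edges edge_pair_in_events
    by (intro finite_measure_finite_Union) (auto simp: disjoint_family_on_def)
  also have "\<dots> = (\<Sum>(e, e')\<in>Sigma E ?succ. P e * trans E P e')"
    by (intro sum.cong) (auto simp: measure_edge_pair)
  also have "\<dots> = (\<Sum>e\<in>E. P e * (\<Sum>e'\<in>?succ e. trans E P e'))"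
    using finite_edges by (simp add: sum.Sigma[symmetric] sum_distrib_left)
  also have "\<dots> = (\<Sum>e\<in>E. P e)"
    using edges_subset by (intro sum.cong) (auto simp: sum_trans_out_edges[OF stationary])
  also have "\<dots> = 1"
    using stationary by (simp add: stationary_mc_def)
  finally show ?thesis .
qed

lemma AE_window_is_path: "AE \<omega> in N. is_path E n (\<lambda>i. \<omega> (k + int i))"
proof -
  have "AE \<omega> in N. \<forall>i::nat. \<omega> (k + int i) \<in> E \<and> snd (\<omega> (k + int i)) = fst (\<omega> (k + int i + 1))"
    using AE_prob_1[OF prob_chained_pair] by (simp add: AE_all_countable)
  then show ?thesis
    by eventually_elim (simp add: is_path_def ac_simps)
qed

lemma AE_window_iff_path_windows:
  "AE \<omega> in N. \<omega> \<in> {\<omega>. \<forall>i<n. \<omega> (k + int i) \<in> X i}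
    \<longleftrightarrow> \<omega> \<in> (\<Union>g\<in>{g \<in> PiE {..<n} (\<lambda>i. X i \<inter> E). is_path E n g}.
        {\<omega>. \<forall>i<n. \<omega> (k + int i) = g i})"
  using AE_window_is_path[of n k]
proof eventually_elim
  case (elim \<omega>)
  let ?g = "restrict (\<lambda>i. \<omega> (k + int i)) {..<n}"
  have "is_path E n ?g = is_path E n (\<lambda>i. \<omega> (k + int i))"
    by (rule is_path_cong) simp
  with elim have "is_path E n ?g" by simp
  show ?case
  proof
    assume "\<omega> \<in> {\<omega>. \<forall>i<n. \<omega> (k + int i) \<in> X i}"
    with elim have "?g \<in> PiE {..<n} (\<lambda>i. X i \<inter> E)"
      unfolding is_path_def by simp
    with \<open>is_path E n ?g\<close> have "?g \<in> {g \<in> PiE {..<n} (\<lambda>i. X i \<inter> E). is_path E n g}"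
      by simp
    then show "\<omega> \<in> (\<Union>g\<in>{g \<in> PiE {..<n} (\<lambda>i. X i \<inter> E). is_path E n g}.
        {\<omega>. \<forall>i<n. \<omega> (k + int i) = g i})"
      by (rule UN_I) simp
  qed (auto simp: PiE_iff)
qed

(* Up to the null set of windows that are not paths, a window cylinder is the disjoint
   union of the cylinders of the paths it contains. *)
lemma measure_window:
  assumes "n \<ge> 1"
  shows "prob {\<omega>. \<forall>i<n. \<omega> (k + int i) \<in> X i}
    = (\<Sum>g\<in>PiE {..<n} (\<lambda>i. X i \<inter> E). path_weight E P n g)"
proof -
  let ?W = "\<lambda>g. {\<omega>. \<forall>i<n. \<omega> (k + int i) = g i}"
  define J where "J = {g \<in> PiE {..<n} (\<lambda>i. X i \<inter> E). is_path E n g}"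
  have "finite (PiE {..<n} (\<lambda>i. X i \<inter> E))"
    using finite_edges by (intro finite_PiE) auto
  then have "finite J" by (simp add: J_def)
  have W_events: "?W g \<in> events" for g
    using window_in_events[of n "\<lambda>i. k + int i" "\<lambda>i. {g i}"] by simp
  have "prob {\<omega>. \<forall>i<n. \<omega> (k + int i) \<in> X i} = prob (\<Union>g\<in>J. ?W g)"
    using AE_window_iff_path_windows \<open>finite J\<close> W_events
    by (intro measure_eq_AE) (auto simp: J_def window_in_events)
  also have "\<dots> = (\<Sum>g\<in>J. prob (?W g))"
    using \<open>finite J\<close> W_events
      disjoint_family_on_mono[OF _ disjoint_family_on_point_windows, of J n "\<lambda>i. X i \<inter> E" k]
    by (intro finite_measure_finite_Union) (auto simp: J_def)
  also have "\<dots> = (\<Sum>g\<in>J. path_weight E P n g)"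
    using assms by (intro sum.cong) (auto simp: J_def measure_path_window)
  also have "\<dots> = (\<Sum>g\<in>PiE {..<n} (\<lambda>i. X i \<inter> E). path_weight E P n g)"
    unfolding J_def using \<open>finite (PiE _ _)\<close>
    by (intro sum.mono_neutral_left) (auto simp: path_weight_def)
  finally show ?thesis .
qed

end

lemma markov_process_unique:
  fixes N1 N2 :: "(int \<Rightarrow> ('v \<times> 'v)) measure"
  assumes "finite_markov_process V E P N1" and "finite_markov_process V E P N2"
  shows "N1 = N2"
proof -
  interpret N1: finite_markov_process V E P N1 by fact
  interpret N2: finite_markov_process V E P N2 by fact
  show ?thesis
  proof (rule measure_eqI_PiM_infinite[where I=UNIV and M="\<lambda>_. count_space UNIV"])
    show "sets N1 = sets (PiM UNIV (\<lambda>_. count_space UNIV))"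
      and "sets N2 = sets (PiM UNIV (\<lambda>_. count_space UNIV))"
      using N1.sets_N N2.sets_N by (simp_all add: seq_space_def)
    show "finite_measure N1" by (rule N1.finite_measure_axioms)
  next
    fix A :: "int \<Rightarrow> ('v \<times> 'v) set" and J :: "int set"
    assume "finite J"
    then obtain k n where "n \<ge> 1" and "J \<subseteq> {k..<k + int n}" by (rule finite_subset_window)
    have "prod_emb UNIV (\<lambda>_. count_space UNIV) J (PiE J A) = {\<omega>. \<forall>j\<in>J. \<omega> j \<in> A j}"
      by (auto simp: prod_emb_def PiE_iff)
    also have "\<dots> = {\<omega>. \<forall>i<n. \<omega> (k + int i) \<in> (if k + int i \<in> J then A (k + int i) else UNIV)}"
      by (rule rectangle_eq_window) fact
    finally show "emeasure N1 (prod_emb UNIV (\<lambda>_. count_space UNIV) J (PiE J A))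
        = emeasure N2 (prod_emb UNIV (\<lambda>_. count_space UNIV) J (PiE J A))"
      by (simp add: N1.emeasure_eq_measure N2.emeasure_eq_measure
          N1.measure_window[OF \<open>n \<ge> 1\<close>] N2.measure_window[OF \<open>n \<ge> 1\<close>])
  qed
qed

lemma measurable_marg1:
  assumes "sets M = sets seq_space"
  shows "marg1 \<in> measurable M seq_space"
proof -
  have "marg1 \<in> measurable seq_space seq_space"
    unfolding seq_space_def marg1_def
    by (rule measurable_PiM_single')
      (auto simp: space_PiM intro!: measurable_compose[OF measurable_component_singleton])
  then show ?thesis
    by (simp add: measurable_cong_sets[OF assms refl])
qed

lemma measure_distr_marg1_window:
  assumes "sets M = sets seq_space"
  shows "measure (distr M seq_space marg1)
      {\<omega> \<in> space (distr M seq_space marg1). \<forall>i<n. \<omega> (k + int i) = f i}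
    = measure M {\<omega>. \<forall>i<n. \<omega> (k + int i) \<in> edge1 -` {f i}}"
proof -
  have "space M = UNIV"
    using sets_eq_imp_space_eq[OF assms] by simp
  then show ?thesis
    using measure_distr[OF measurable_marg1[OF assms] window_in_sets_seq_space,
        of n "\<lambda>i. k + int i" "\<lambda>i. {f i}"]
    by (simp add: marg1_def vimage_def)
qed

definition edge_lifts ::
    "('a \<times> 'a) set \<Rightarrow> ('b \<times> 'b) set \<Rightarrow> 'a \<times> 'a \<Rightarrow> (('a \<times> 'b) \<times> ('a \<times> 'b)) set" where
  "edge_lifts E1 E2 e = edge1 -` {e} \<inter> prod_edges E1 E2"

locale marginal_chain =
  fixes V1 :: "'a set" and E1 :: "('a \<times> 'a) set"
    and V2 :: "'b set" and E2 :: "('b \<times> 'b) set"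
    and P :: "(('a \<times> 'b) \<times> ('a \<times> 'b)) \<Rightarrow> real"
    and P1 :: "('a \<times> 'a) \<Rightarrow> real"
  assumes G1: "simple_digraph V1 E1"
    and G2: "simple_digraph V2 E2"
    and marginal: "\<forall>e\<in>E1. P1 e = (\<Sum>e'\<in>{e'\<in>prod_edges E1 E2. edge1 e' = e}. P e')"
    and lumpable: "\<forall>u0\<in>V2. \<forall>v0\<in>V1. \<forall>v1\<in>V1.
              (\<Sum>u1\<in>V2. trans_prob (prod_edges E1 E2) P (v0, u0) (v1, u1))
                = trans_prob E1 P1 v0 v1"
begin

lemma prod_edges_subset: "prod_edges E1 E2 \<subseteq> (V1 \<times> V2) \<times> (V1 \<times> V2)"
  using G1 G2 by (auto simp: simple_digraph_def prod_edges_def)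

lemma finite_prod_edges: "finite (prod_edges E1 E2)"
  using G1 G2 by (intro finite_subset[OF prod_edges_subset]) (auto simp: simple_digraph_def)

lemma sum_trans_lifts_from:
  assumes "(a, b) \<in> E1" and "u \<in> V2"
  shows "(\<Sum>e\<in>{e\<in>edge_lifts E1 E2 (a, b). fst e = (a, u)}. trans (prod_edges E1 E2) P e)
    = trans E1 P1 (a, b)"
proof -
  let ?succ = "{u'\<in>V2. (u, u') \<in> E2}"
  have "a \<in> V1" "b \<in> V1" "finite V2" "E2 \<subseteq> V2 \<times> V2"
    using assms(1) G1 G2 by (auto simp: simple_digraph_def)
  have lifts_eq: "{e\<in>edge_lifts E1 E2 (a, b). fst e = (a, u)} = (\<lambda>u'. ((a, u), (b, u'))) ` ?succ"
    using assms(1) \<open>E2 \<subseteq> V2 \<times> V2\<close>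
    by (force simp: edge_lifts_def edge1_def prod_edges_def)
  have "(\<Sum>e\<in>{e\<in>edge_lifts E1 E2 (a, b). fst e = (a, u)}. trans (prod_edges E1 E2) P e)
      = (\<Sum>u'\<in>?succ. trans (prod_edges E1 E2) P ((a, u), (b, u')))"
    unfolding lifts_eq by (subst sum.reindex) (auto simp: inj_on_def)
  also have "\<dots> = (\<Sum>u'\<in>V2. trans_prob (prod_edges E1 E2) P (a, u) (b, u'))"
    using \<open>finite V2\<close> assms(1)
    by (simp add: sum.inter_filter trans_prob_def prod_edges_def)
  also have "\<dots> = trans_prob E1 P1 a b"
    using lumpable assms(2) \<open>a \<in> V1\<close> \<open>b \<in> V1\<close> by blast
  finally show ?thesis
    using assms(1) by (simp add: trans_prob_def)
qed

lemma sum_trans_lifts_after: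
  assumes "d \<in> edge_lifts E1 E2 e0" and "e \<in> E1" and "snd e0 = fst e"
  shows "(\<Sum>e'\<in>edge_lifts E1 E2 e. if snd d = fst e' then trans (prod_edges E1 E2) P e' else 0)
    = trans E1 P1 e"
proof -
  obtain a u b u' where d: "d = ((a, u), (b, u'))" and "(u, u') \<in> E2" and "snd e0 = b"
    using assms(1) by (auto simp: edge_lifts_def edge1_def prod_edges_def)
  then have "u' \<in> V2" using G2 by (auto simp: simple_digraph_def)
  obtain c where e: "e = (b, c)"
    using assms(3) \<open>snd e0 = b\<close> by (metis prod.collapse)
  have "finite (edge_lifts E1 E2 e)"
    using finite_prod_edges by (simp add: edge_lifts_def)
  then have "(\<Sum>e'\<in>edge_lifts E1 E2 e. if snd d = fst e' then trans (prod_edges E1 E2) P e' else 0)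
      = (\<Sum>e'\<in>{e'\<in>edge_lifts E1 E2 (b, c). fst e' = (b, u')}. trans (prod_edges E1 E2) P e')"
    by (simp add: sum.inter_filter[symmetric] d e eq_commute)
  also have "\<dots> = trans E1 P1 e"
    using assms(2) \<open>u' \<in> V2\<close> by (simp add: e sum_trans_lifts_from)
  finally show ?thesis .
qed

lemma sum_path_weight_lifts:
  assumes "is_path E1 (Suc n) f"
  shows "(\<Sum>g\<in>PiE {..<Suc n} (\<lambda>i. edge_lifts E1 E2 (f i)). path_weight (prod_edges E1 E2) P (Suc n) g)
    = path_weight E1 P1 (Suc n) f"
  using assms
proof (induction n)
  case 0
  then have "f 0 \<in> E1" by (simp add: is_path_def)
  have "(\<Sum>g\<in>PiE {..<Suc 0} (\<lambda>i. edge_lifts E1 E2 (f i)). path_weight (prod_edges E1 E2) P (Suc 0) g)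
      = (\<Sum>e\<in>edge_lifts E1 E2 (f 0). P e)"
    by (simp add: sum_PiE_lessThan_Suc path_weight_def is_path_def edge_lifts_def)
  also have "\<dots> = P1 (f 0)"
    using marginal \<open>f 0 \<in> E1\<close>
    by (simp add: edge_lifts_def Int_def Collect_conj_eq[symmetric] conj_commute)
  finally show ?case
    using 0 by (simp add: path_weight_def)
next
  case (Suc n)
  let ?E = "prod_edges E1 E2" and ?L = "\<lambda>i. edge_lifts E1 E2 (f i)"
  have "f (Suc n) \<in> E1" and "snd (f n) = fst (f (Suc n))"
    using Suc.prems by (simp_all add: is_path_Suc_Suc)
  have last_step: "(\<Sum>e\<in>?L (Suc n). if e \<in> ?E \<and> snd (g n) = fst e then trans ?E P e else 0)
      = trans E1 P1 (f (Suc n))" if "g \<in> PiE {..<Suc n} ?L" for g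
  proof -
    have "g n \<in> ?L n" using that by auto
    then have "(\<Sum>e\<in>?L (Suc n). if snd (g n) = fst e then trans ?E P e else 0) = trans E1 P1 (f (Suc n))"
      using \<open>f (Suc n) \<in> E1\<close> \<open>snd (f n) = fst (f (Suc n))\<close> by (rule sum_trans_lifts_after)
    then show ?thesis
      by (simp add: edge_lifts_def)
  qed
  have "(\<Sum>g\<in>PiE {..<Suc (Suc n)} ?L. path_weight ?E P (Suc (Suc n)) g)
      = (\<Sum>g\<in>PiE {..<Suc n} ?L. path_weight ?E P (Suc n) g *
          (\<Sum>e\<in>?L (Suc n). if e \<in> ?E \<and> snd (g n) = fst e then trans ?E P e else 0))"
    by (simp add: sum_PiE_lessThan_Suc path_weight_extend sum_distrib_left sum.swap[of _ "?L (Suc n)"])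
  also have "\<dots> = (\<Sum>g\<in>PiE {..<Suc n} ?L. path_weight ?E P (Suc n) g) * trans E1 P1 (f (Suc n))"
    by (simp add: last_step sum_distrib_right)
  also have "\<dots> = path_weight E1 P1 (Suc (Suc n)) f"
    using Suc path_weight_extend[of E1 P1 n f "f (Suc n)"] by (simp add: is_path_Suc_Suc)
  finally show ?case .
qed

lemma marginal_markov_process:
  assumes "finite_markov_process (V1 \<times> V2) (prod_edges E1 E2) P M"
  shows "markov_process V1 E1 P1 (distr M seq_space marg1)"
proof -
  interpret M: finite_markov_process "V1 \<times> V2" "prod_edges E1 E2" P M by fact
  show ?thesis
    unfolding markov_process_def
  proof (intro conjI allI impI)
    show "prob_space (distr M seq_space marg1)"
      by (rule M.prob_space_distr[OF measurable_marg1[OF M.sets_N]])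
    show "sets (distr M seq_space marg1) = sets seq_space" by simp
    fix k n f assume "1 \<le> n" and "is_path E1 n f"
    then obtain m where "n = Suc m" by (cases n) auto
    have "measure (distr M seq_space marg1) {\<omega> \<in> space (distr M seq_space marg1). \<forall>i<n. \<omega> (k + int i) = f i}
        = M.prob {\<omega>. \<forall>i<n. \<omega> (k + int i) \<in> edge1 -` {f i}}"
      by (rule measure_distr_marg1_window[OF M.sets_N])
    also have "\<dots> = (\<Sum>g\<in>PiE {..<n} (\<lambda>i. edge_lifts E1 E2 (f i)). path_weight (prod_edges E1 E2) P n g)"
      unfolding edge_lifts_def by (rule M.measure_window) fact
    also have "\<dots> = path_weight E1 P1 n f"
      using \<open>is_path E1 n f\<close> by (simp add: \<open>n = Suc m\<close> sum_path_weight_lifts)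
    finally show "measure (distr M seq_space marg1) {\<omega> \<in> space (distr M seq_space marg1). \<forall>i<n. \<omega> (k + int i) = f i}
        = P1 (f 0) * (\<Prod>i\<in>{1..<n}. trans E1 P1 (f i))"
      using \<open>is_path E1 n f\<close> by (simp add: path_weight_def)
  qed
qed

end

theorem lemma27:
  fixes V1 :: "'a set" and E1 :: "('a \<times> 'a) set"
    and V2 :: "'b set" and E2 :: "('b \<times> 'b) set"
    and P :: "(('a \<times> 'b) \<times> ('a \<times> 'b)) \<Rightarrow> real"
    and P1 :: "('a \<times> 'a) \<Rightarrow> real"
    and M :: "(int \<Rightarrow> (('a \<times> 'b) \<times> ('a \<times> 'b))) measure"
    and M1 :: "(int \<Rightarrow> ('a \<times> 'a)) measure"
  assumes G1: "simple_digraph V1 E1"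
    and G2: "simple_digraph V2 E2"
    and chain: "stationary_mc (V1 \<times> V2) (prod_edges E1 E2) P"
    and chain1: "stationary_mc V1 E1 P1"
    and proc: "markov_process (V1 \<times> V2) (prod_edges E1 E2) P M"
    and proc1: "markov_process V1 E1 P1 M1"
    and i: "\<forall>e\<in>E1. P1 e = (\<Sum>e'\<in>{e'\<in>prod_edges E1 E2. edge1 e' = e}. P e')"
    and ii: "\<forall>u0\<in>V2. \<forall>v0\<in>V1. \<forall>v1\<in>V1.
              (\<Sum>u1\<in>V2. trans_prob (prod_edges E1 E2) P (v0, u0) (v1, u1))
                = trans_prob E1 P1 v0 v1"
  shows "distr M seq_space marg1 = M1"
proof -
  interpret marginal_chain V1 E1 V2 E2 P P1
    using G1 G2 i ii by unfold_locales
  have E1: "finite E1" "E1 \<subseteq> V1 \<times> V1"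
    using G1 by (auto simp: simple_digraph_def intro: finite_subset)
  have "finite_markov_process (V1 \<times> V2) (prod_edges E1 E2) P M"
    using proc chain finite_prod_edges prod_edges_subset by unfold_locales
  then have "finite_markov_process V1 E1 P1 (distr M seq_space marg1)"
    using chain1 E1 by unfold_locales (rule marginal_markov_process)
  moreover have "finite_markov_process V1 E1 P1 M1"
    using proc1 chain1 E1 by unfold_locales
  ultimately show ?thesis
    by (rule markov_process_unique)
qed

end
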